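(* Let $U\subset\mathbb{R}^n$ be Lebesgue measurable, $f:U\to\mathbb{R}$ measurable, $\Omega=\{x\in U: D^-f(x)\neq\emptyset\}$, and let $g\in C^1(\mathbb{R}^n)$. Then for almost every $x$ in the set $A=\{x\in\Omega: f(x)=g(x)\}$ we have $D^-f(x)=\{\nabla g(x)\}$.
   Context: $D^-f(x)$ is the Fréchet subdifferential of $f$ at $x$: the set of $\zeta\in\mathbb{R}^n$ such that $\liminf_{h\to 0,\ x+h\in U}\frac{f(x+h)-f(x)-\langle\zeta,h\rangle}{|h|}\ge 0$. "Almost every" is with respect to Lebesgue (outer) measure $\mathcal{L}^n$. *)

theory Defs
  imports "HOL-Analysis.Analysis"
begin

definition frechet_subdiff :: "'a::euclidean_space set \<Rightarrow> ('a \<Rightarrow> real) \<Rightarrow> 'a \<Rightarrow> 'a set" where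
  "frechet_subdiff U f x =
     {z. Liminf (at 0 within {h. x + h \<in> U})
           (\<lambda>h. ereal ((f (x + h) - f x - z \<bullet> h) / norm h)) \<ge> 0}"

end

theory Submission
  imports Defs
begin

text \<open>
  Let \<open>E = {f = g}\<close>, a measurable set. For a fixed direction \<open>d\<close> and radius \<open>e\<close>, the
  points of \<open>E\<close> from which no point of \<open>E\<close> lies in the truncated open cone around \<open>d\<close> form a
  null set, because their translates by distinct small multiples of \<open>d\<close> are pairwise disjoint.
  Taking \<open>d\<close> in a countable dense set, almost every \<open>x \<in> E\<close> is approached by \<open>E\<close> from
  every direction. At such a point, a Frechet subgradient \<open>z\<close> of \<open>f\<close> and the gradient of
  \<open>g\<close> satisfy \<open>(\<nabla>g(x) - z)\<cdot>h \<ge> -\<epsilon>|h|\<close> for all small \<open>h\<close> with \<open>x + h \<in> E\<close>, since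
  \<open>f = g\<close> on \<open>E\<close>; approaching along \<open>z - \<nabla>g(x)\<close> forces \<open>z = \<nabla>g(x)\<close>.
\<close>

lemma null_sets_if_disjoint_translates:
  fixes B :: "'a::euclidean_space set" and c :: "nat \<Rightarrow> 'a"
  assumes B: "B \<in> sets lebesgue" "bounded B" and c: "bounded (range c)"
    and disj: "pairwise (\<lambda>i j. disjnt ((+) (c i) ` B) ((+) (c j) ` B)) UNIV"
  shows "B \<in> null_sets lebesgue"
proof -
  have Bm: "B \<in> lmeasurable" using B by (simp add: bounded_set_imp_lmeasurable)
  obtain r where r: "\<forall>y\<in>(\<Union>a\<in>range c. \<Union>b\<in>B. {a + b}). norm y \<le> r"
    using bounded_sums[OF c B(2)] bounded_iff by metis
  then have translates_bounded: "(+) (c k) ` B \<subseteq> cball 0 r" for k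
    by fastforce
  have "real N * measure lebesgue B \<le> measure lebesgue (cball (0::'a) r)" for N
  proof -
    have "real N * measure lebesgue B = (\<Sum>k<N. measure lebesgue ((+) (c k) ` B))"
      by (simp add: measure_translation)
    also have "\<dots> = measure lebesgue (\<Union>k<N. (+) (c k) ` B)"
      using Bm disj by (intro measure_UNION'[symmetric])
        (auto intro: measurable_translation pairwise_subset)
    also have "\<dots> \<le> measure lebesgue (cball (0::'a) r)"
      using translates_bounded
      by (intro measure_mono_fmeasurable)
        (auto intro!: sets.finite_UN fmeasurableD measurable_translation Bm)
    finally show ?thesis .
  qed
  then have "measure lebesgue B = 0"
    by (metis measure_nonneg reals_Archimedean3 linorder_not_le order.not_eq_order_implies_strict)
  then show ?thesis
    using Bm by (auto simp: emeasure_eq_measure2)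
qed

definition direction_cone :: "'a::real_normed_vector \<Rightarrow> real \<Rightarrow> 'a set" where
  "direction_cone d e = (\<Union>t\<in>{0<..<e}. (*\<^sub>R) t ` ball d e)"

lemma open_direction_cone: "open (direction_cone d e)"
  unfolding direction_cone_def by (auto intro!: open_UN open_scaling)

lemma scaleR_in_direction_cone: "0 < s \<Longrightarrow> s < e \<Longrightarrow> s *\<^sub>R d \<in> direction_cone d e"
  unfolding direction_cone_def by (auto intro!: bexI[of _ s])

lemma direction_cone_mono:
  assumes "dist d d' + e' \<le> e"
  shows "direction_cone d' e' \<subseteq> direction_cone d e"
proof -
  have "ball d' e' \<subseteq> ball d e"
  proof
    fix y assume "y \<in> ball d' e'"
    then show "y \<in> ball d e"
      using assms dist_triangle[of d y d'] by simp
  qed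
  moreover have "e' \<le> e"
    using assms zero_le_dist[of d d'] by linarith
  then have "{0<..<e'} \<subseteq> {0<..<e}"
    by auto
  ultimately show ?thesis
    unfolding direction_cone_def by (intro UN_mono image_mono)
qed

definition cone_accessible :: "'a::real_normed_vector set \<Rightarrow> 'a \<Rightarrow> bool" where
  "cone_accessible E x \<longleftrightarrow> (\<forall>d e. 0 < e \<longrightarrow> (\<exists>h\<in>direction_cone d e. x + h \<in> E))"

lemma null_sets_cone_isolated_points:
  fixes E :: "'a::euclidean_space set"
  assumes E: "E \<in> sets lebesgue" and e: "0 < e"
  shows "{x\<in>E. \<forall>h\<in>direction_cone d e. x + h \<notin> E} \<in> null_sets lebesgue"
    (is "?B \<in> _")
proof -
  have "{x. \<exists>h\<in>direction_cone d e. x + h \<in> E} = (\<Union>y\<in>E. (\<lambda>h. y - h) ` direction_cone d e)"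
  proof (intro set_eqI iffI)
    fix x assume "x \<in> {x. \<exists>h\<in>direction_cone d e. x + h \<in> E}"
    then obtain h where "h \<in> direction_cone d e" "x + h \<in> E" by blast
    then show "x \<in> (\<Union>y\<in>E. (\<lambda>h. y - h) ` direction_cone d e)"
      by (intro UN_I[of "x + h"] image_eqI[of _ _ h]) auto
  next
    fix x assume "x \<in> (\<Union>y\<in>E. (\<lambda>h. y - h) ` direction_cone d e)"
    then obtain y h where "y \<in> E" "h \<in> direction_cone d e" "x = y - h" by blast
    then show "x \<in> {x. \<exists>h\<in>direction_cone d e. x + h \<in> E}" by (auto intro!: bexI[of _ h])
  qed
  then have "open {x. \<exists>h\<in>direction_cone d e. x + h \<in> E}"
    by (simp add: open_UN open_neg_translation open_direction_cone)
  moreover have "?B = E - {x. \<exists>h\<in>direction_cone d e. x + h \<in> E}" by auto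
  ultimately have B: "?B \<in> sets lebesgue"
    using E by (simp add: borel_open sets.Diff sets_completionI_sets sets_lborel)
  text \<open>Two points of \<open>?B\<close> never differ by a vector of the cone, so the translates of
    \<open>?B\<close> by the distinct multiples \<open>t k *\<^sub>R d\<close> of \<open>d\<close>, \<open>0 < t k < e\<close>, are pairwise disjoint.\<close>
  define t where "t k = e / (real k + 2)" for k :: nat
  have t_range: "0 < t k" "t k < e" for k
    unfolding t_def using e by (auto simp: field_simps add_pos_nonneg)
  have t_inj: "t i \<noteq> t j" if "i \<noteq> j" for i j
    unfolding t_def using e that by simp
  have shift_notin: "x + s *\<^sub>R d \<notin> E" if "x \<in> ?B" "0 < s" "s < e" for x s
    using that scaleR_in_direction_cone[of s e d] by blast
  have translates_ne: "t i *\<^sub>R d + x \<noteq> t j *\<^sub>R d + y"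
    if "i \<noteq> j" "x \<in> ?B" "y \<in> ?B" for i j x y
  proof
    assume eq: "t i *\<^sub>R d + x = t j *\<^sub>R d + y"
    consider "t j < t i" | "t i < t j"
      using t_inj[OF \<open>i \<noteq> j\<close>] by linarith
    then show False
    proof cases
      case 1
      with eq have "y = x + (t i - t j) *\<^sub>R d" by (simp add: algebra_simps)
      then show False
        using shift_notin[of x "t i - t j"] 1 t_range[of i] t_range[of j] that by auto
    next
      case 2
      with eq have "x = y + (t j - t i) *\<^sub>R d" by (simp add: algebra_simps)
      then show False
        using shift_notin[of y "t j - t i"] 2 t_range[of i] t_range[of j] that by auto
    qed
  qed
  have "?B \<inter> cball 0 (real n) \<in> null_sets lebesgue" for n
  proof (rule null_sets_if_disjoint_translates)
    show "pairwise (\<lambda>i j. disjnt ((+) (t i *\<^sub>R d) ` (?B \<inter> cball 0 (real n)))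
                                ((+) (t j *\<^sub>R d) ` (?B \<inter> cball 0 (real n)))) UNIV"
    proof (rule pairwiseI)
      fix i j :: nat assume "i \<noteq> j"
      then show "disjnt ((+) (t i *\<^sub>R d) ` (?B \<inter> cball 0 (real n)))
                        ((+) (t j *\<^sub>R d) ` (?B \<inter> cball 0 (real n)))"
        using translates_ne unfolding disjnt_def by blast
    qed
    have "range (\<lambda>k. t k *\<^sub>R d) \<subseteq> cball 0 (e * norm d)"
      using t_range by (auto intro!: mult_right_mono simp: less_imp_le)
    then show "bounded (range (\<lambda>k. t k *\<^sub>R d))"
      using bounded_cball bounded_subset by blast
  qed (use B in auto)
  then have "(\<Union>n. ?B \<inter> cball 0 (real n)) \<in> null_sets lebesgue" by blast
  moreover have "?B = (\<Union>n. ?B \<inter> cball 0 (real n))"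
    by (auto simp: real_arch_simple)
  ultimately show ?thesis by simp
qed

lemma AE_cone_accessible:
  fixes E :: "'a::euclidean_space set"
  assumes E: "E \<in> sets lebesgue"
  shows "AE x in lebesgue. x \<in> E \<longrightarrow> cone_accessible E x"
proof -
  obtain D :: "'a set" where D: "countable D" "\<And>X. open X \<Longrightarrow> X \<noteq> {} \<Longrightarrow> \<exists>d\<in>D. d \<in> X"
    using countable_dense_exists by blast
  define N where "N = (\<Union>d\<in>D. \<Union>n. {x\<in>E. \<forall>h\<in>direction_cone d (1 / Suc n). x + h \<notin> E})"
  have "N \<in> null_sets lebesgue"
    unfolding N_def using D(1) E by (intro null_sets_UN' null_sets_UN null_sets_cone_isolated_points) auto
  moreover have "cone_accessible E x" if "x \<in> E" "x \<notin> N" for x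
    unfolding cone_accessible_def
  proof (intro allI impI)
    fix d :: 'a and e :: real
    assume "0 < e"
    then obtain n :: nat where n: "1 / Suc n < e / 2"
      by (metis half_gt_zero inverse_eq_divide reals_Archimedean)
    obtain d' where "d' \<in> D" "dist d d' < e / 2"
      using D(2)[of "ball d (e / 2)"] \<open>0 < e\<close> by auto
    moreover have "direction_cone d' (1 / Suc n) \<subseteq> direction_cone d e"
      using calculation(2) n by (intro direction_cone_mono) linarith
    ultimately show "\<exists>h\<in>direction_cone d e. x + h \<in> E"
      using that unfolding N_def by blast
  qed
  ultimately show ?thesis
    by (auto intro: AE_I'[where N = N])
qed

lemma frechet_subdiffD:
  assumes "z \<in> frechet_subdiff U f x" and "0 < \<epsilon>"
  obtains \<delta> where "0 < \<delta>"
    "\<And>h. x + h \<in> U \<Longrightarrow> h \<noteq> 0 \<Longrightarrow> norm h < \<delta> \<Longrightarrow> f x + z \<bullet> h - \<epsilon> * norm h < f (x + h)"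
proof -
  have "ereal (- \<epsilon>) < Liminf (at 0 within {h. x + h \<in> U}) (\<lambda>h. ereal ((f (x + h) - f x - z \<bullet> h) / norm h))"
    using assms unfolding frechet_subdiff_def by (simp add: less_le_trans[of _ 0])
  then have "\<forall>\<^sub>F h in at 0 within {h. x + h \<in> U}. - \<epsilon> < (f (x + h) - f x - z \<bullet> h) / norm h"
    by (auto dest: less_LiminfD)
  then obtain \<delta> where "0 < \<delta>"
    "\<And>h. x + h \<in> U \<Longrightarrow> h \<noteq> 0 \<Longrightarrow> norm h < \<delta> \<Longrightarrow> - \<epsilon> < (f (x + h) - f x - z \<bullet> h) / norm h"
    unfolding eventually_at by (auto simp: dist_norm)
  then show thesis
    by (intro that[of \<delta>]) (auto simp: field_simps)
qed

lemma contact_set_inner_lower_bound: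
  fixes f g :: "'a::euclidean_space \<Rightarrow> real"
  assumes z: "z \<in> frechet_subdiff U f x" and g: "(g has_derivative (\<lambda>h. G \<bullet> h)) (at x)"
    and E: "E \<subseteq> U" "\<And>y. y \<in> E \<Longrightarrow> f y = g y" "x \<in> E" and "0 < \<epsilon>"
  shows "\<exists>\<delta>>0. \<forall>h. x + h \<in> E \<longrightarrow> h \<noteq> 0 \<longrightarrow> norm h < \<delta> \<longrightarrow> - \<epsilon> * norm h < (G - z) \<bullet> h"
proof -
  obtain \<delta>1 where "0 < \<delta>1" and f_below:
    "\<And>h. x + h \<in> U \<Longrightarrow> h \<noteq> 0 \<Longrightarrow> norm h < \<delta>1 \<Longrightarrow> f x + z \<bullet> h - \<epsilon> / 2 * norm h < f (x + h)"
    using frechet_subdiffD[OF z, of "\<epsilon> / 2"] \<open>0 < \<epsilon>\<close> by auto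
  obtain \<delta>2 where "0 < \<delta>2" and g_above:
    "\<And>y. norm (y - x) < \<delta>2 \<Longrightarrow> norm (g y - g x - G \<bullet> (y - x)) \<le> \<epsilon> / 2 * norm (y - x)"
    using g \<open>0 < \<epsilon>\<close> unfolding has_derivative_at_alt by (metis half_gt_zero)
  have "- \<epsilon> * norm h < (G - z) \<bullet> h"
    if "x + h \<in> E" "h \<noteq> 0" "norm h < min \<delta>1 \<delta>2" for h
  proof -
    have "f x + z \<bullet> h - \<epsilon> / 2 * norm h < f (x + h)"
      using f_below that E(1) by auto
    moreover have "norm (g (x + h) - g x - G \<bullet> h) \<le> \<epsilon> / 2 * norm h"
      using g_above[of "x + h"] that by simp
    then have "g (x + h) - g x - G \<bullet> h \<le> \<epsilon> / 2 * norm h"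
      by (metis abs_le_D1 real_norm_def)
    ultimately show ?thesis
      unfolding inner_diff_left using E(2)[OF that(1)] E(2)[OF E(3)] by linarith
  qed
  then show ?thesis
    using \<open>0 < \<delta>1\<close> \<open>0 < \<delta>2\<close> by (intro exI[of _ "min \<delta>1 \<delta>2"]) auto
qed

lemma eq_0_if_cone_accessible_inner_lower_bound:
  fixes w :: "'a::real_inner"
  assumes "cone_accessible E x"
    and lower: "\<And>\<epsilon>. 0 < \<epsilon> \<Longrightarrow> \<exists>\<delta>>0. \<forall>h. x + h \<in> E \<longrightarrow> h \<noteq> 0 \<longrightarrow> norm h < \<delta> \<longrightarrow> - \<epsilon> * norm h < w \<bullet> h"
  shows "w = 0"
proof (rule ccontr)
  assume "w \<noteq> 0"
  then have "0 < norm w" by simp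
  then obtain \<delta> where "0 < \<delta>" and lower_w:
    "\<And>h. x + h \<in> E \<Longrightarrow> h \<noteq> 0 \<Longrightarrow> norm h < \<delta> \<Longrightarrow> - (norm w / 2) * norm h < w \<bullet> h"
    using lower[of "norm w / 2"] by auto
  text \<open>Approach \<open>x\<close> from the direction \<open>- w\<close>, where \<open>w \<bullet> h\<close> is close to \<open>- norm w * norm h\<close>.\<close>
  define e where "e = min (norm w / 4) (\<delta> / (2 * norm w))"
  have "0 < e" unfolding e_def using \<open>0 < norm w\<close> \<open>0 < \<delta>\<close> by simp
  then obtain h where "h \<in> direction_cone (- w) e" "x + h \<in> E"
    using \<open>cone_accessible E x\<close> unfolding cone_accessible_def by blast
  then obtain t v where t: "0 < t" "t < e" and v: "norm (v + w) < e" and h: "h = t *\<^sub>R v"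
    unfolding direction_cone_def by (auto simp: dist_norm norm_minus_commute[of "- w"])
  have "norm (v + w) < norm w / 4" using v unfolding e_def by linarith
  then have v_norm: "norm v \<le> 5 / 4 * norm w"
    using norm_triangle_ineq4[of "v + w" w] by simp
  have "w \<bullet> v = w \<bullet> (v + w) - norm w ^ 2"
    by (simp add: inner_add_right power2_norm_eq_inner)
  also have "\<dots> \<le> norm w * norm (v + w) - norm w ^ 2"
    using norm_cauchy_schwarz[of w "v + w"] by linarith
  also have "\<dots> \<le> norm w * (norm w / 4) - norm w ^ 2"
    using \<open>norm (v + w) < norm w / 4\<close> by (intro diff_right_mono mult_left_mono) auto
  also have "\<dots> = - 3 / 4 * norm w ^ 2"
    by (simp add: power2_eq_square)
  finally have wv: "w \<bullet> v \<le> - 3 / 4 * norm w ^ 2" .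
  have "v \<noteq> 0" using \<open>norm (v + w) < norm w / 4\<close> by auto
  have "norm h \<le> t * (5 / 4 * norm w)"
    using h t v_norm by (simp add: mult_left_mono)
  also have "\<dots> < e * (2 * norm w)"
    by (rule mult_strict_mono) (use t \<open>0 < norm w\<close> in linarith)+
  also have "\<dots> \<le> \<delta>"
    using \<open>0 < norm w\<close> unfolding e_def by (simp add: min_def field_simps)
  finally have "- (norm w / 2 * norm h) < t * (w \<bullet> v)"
    using lower_w[of h] \<open>x + h \<in> E\<close> \<open>v \<noteq> 0\<close> t h by simp
  moreover have "norm w / 2 * norm h \<le> 5 / 8 * (t * norm w ^ 2)"
  proof -
    have "norm w / 2 * norm h \<le> norm w / 2 * (t * (5 / 4 * norm w))"
      using \<open>norm h \<le> t * (5 / 4 * norm w)\<close> by (rule mult_left_mono) simp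
    then show ?thesis by (simp add: power2_eq_square mult_ac)
  qed
  moreover have "t * (w \<bullet> v) \<le> - 3 / 4 * (t * norm w ^ 2)"
  proof -
    have "t * (w \<bullet> v) \<le> t * (- 3 / 4 * norm w ^ 2)"
      using wv by (rule mult_left_mono) (use t in simp)
    then show ?thesis by (metis mult.left_commute)
  qed
  moreover have "0 < t * norm w ^ 2"
    using t \<open>0 < norm w\<close> by simp
  ultimately show False
    by linarith
qed

lemma sets_lebesgue_coincidence_set:
  fixes f g :: "'a::euclidean_space \<Rightarrow> 'b::{second_countable_topology, linorder_topology}"
  assumes U: "U \<in> sets lebesgue"
    and f: "f \<in> borel_measurable (lebesgue_on U)" and g: "g \<in> borel_measurable (lebesgue_on U)"
  shows "{y \<in> U. f y = g y} \<in> sets lebesgue"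
proof -
  have "{y \<in> space (lebesgue_on U). f y = g y} \<in> sets (lebesgue_on U)"
    using f g by (rule borel_measurable_eq)
  then show ?thesis
    using U by (simp add: space_restrict_space sets_restrict_space_iff)
qed

lemma frechet_subdiff_subset_gradient:
  fixes f g :: "'a::euclidean_space \<Rightarrow> real"
  assumes g: "(g has_derivative (\<lambda>h. G \<bullet> h)) (at x)"
    and E: "E \<subseteq> U" "\<And>y. y \<in> E \<Longrightarrow> f y = g y" "x \<in> E" and "cone_accessible E x"
  shows "frechet_subdiff U f x \<subseteq> {G}"
proof
  fix z assume z: "z \<in> frechet_subdiff U f x"
  have "G - z = 0"
    by (rule eq_0_if_cone_accessible_inner_lower_bound[OF \<open>cone_accessible E x\<close>
          contact_set_inner_lower_bound[OF z g E]])
  then show "z \<in> {G}" by simp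
qed

theorem mainTheorem4:
  fixes U :: "'a::euclidean_space set" and f :: "'a \<Rightarrow> real"
    and g :: "'a \<Rightarrow> real" and G :: "'a \<Rightarrow> 'a"
  assumes U_meas: "U \<in> sets lebesgue"
    and f_meas: "f \<in> borel_measurable (lebesgue_on U)"
    and g_diff: "\<And>x. (g has_derivative (\<lambda>h. G x \<bullet> h)) (at x)"
    and G_cont: "continuous_on UNIV G"
  shows "AE x in lebesgue.
           x \<in> {y \<in> {y \<in> U. frechet_subdiff U f y \<noteq> {}}. f y = g y} \<longrightarrow>
           frechet_subdiff U f x = {G x}"
proof -
  define E where "E = {y \<in> U. f y = g y}"
  have E_sub: "E \<subseteq> U" and E_eq: "\<And>y. y \<in> E \<Longrightarrow> f y = g y"
    by (auto simp: E_def)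
  have "isCont g x" for x
    using g_diff by (rule has_derivative_continuous)
  then have "g \<in> borel_measurable (lebesgue_on U)"
    using U_meas by (intro continuous_imp_measurable_on_sets_lebesgue continuous_at_imp_continuous_on) auto
  then have "E \<in> sets lebesgue"
    unfolding E_def using U_meas f_meas by (intro sets_lebesgue_coincidence_set)
  have subdiff_eq: "x \<in> {y \<in> {y \<in> U. frechet_subdiff U f y \<noteq> {}}. f y = g y} \<longrightarrow>
      frechet_subdiff U f x = {G x}"
    if accessible: "x \<in> E \<longrightarrow> cone_accessible E x" for x
  proof
    assume x: "x \<in> {y \<in> {y \<in> U. frechet_subdiff U f y \<noteq> {}}. f y = g y}"
    then have "x \<in> E" by (simp add: E_def)
    then have "frechet_subdiff U f x \<subseteq> {G x}"
      using accessible by (intro frechet_subdiff_subset_gradient[OF g_diff E_sub E_eq]) auto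
    then show "frechet_subdiff U f x = {G x}"
      using x by (simp add: subset_singleton_iff)
  qed
  from AE_cone_accessible[OF \<open>E \<in> sets lebesgue\<close>] show ?thesis
    by (rule eventually_mono) (rule subdiff_eq)
qed

end
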